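(* Let $P,Q$ be probability measures with $P\ll Q$, let $\beta>1$, let $E$ be measurable with $q:=Q(E)\in(0,1)$, and set $\mathcal H_\beta:=\mathcal H_\beta(P\Vert Q)$ and $$u_0:=\min\Big\{1,\ \big((1+(\beta-1)\mathcal H_\beta)\,q^{\beta-1}\big)^{1/\beta}\Big\}.$$ Then $$P(E)\le\Big(q^{\beta-1}\big[1+(\beta-1)\mathcal H_\beta-(1-q)^{1-\beta}(1-u_0)^\beta\big]_+\Big)^{1/\beta}.$$
   Context: For $P\ll Q$ and $\beta>1$, $\mathcal H_\beta(P\Vert Q):=\int \frac{(\mathrm dP/\mathrm dQ)^\beta-1}{\beta-1}\,\mathrm dQ$ (the power divergence of order $\beta$). $[x]_+:=\max\{x,0\}$. *)

theory Defs
  imports "HOL-Probability.Probability"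
begin

text \<open>Power divergence of order beta, for P absolutely continuous w.r.t. Q:
  H_beta(P||Q) = integral over Q of ((dP/dQ)^beta - 1)/(beta - 1).
  Since Q is a probability measure this equals (integral of (dP/dQ)^beta dQ - 1)/(beta - 1);
  the value is taken in the extended reals so that it may be +infinity.\<close>
definition power_divergence :: "real \<Rightarrow> 'a measure \<Rightarrow> 'a measure \<Rightarrow> ereal" where
  "power_divergence \<beta> P Q =
     (enn2ereal (\<integral>\<^sup>+ x. ennreal ((enn2real (RN_deriv Q P x)) powr \<beta>) \<partial>Q) - 1) / ereal (\<beta> - 1)"

end

theory Submission
  imports Defs
begin

text \<open>
  With \<open>f = dP/dQ\<close> we have \<open>\<integral> f\<^sup>\<beta> dQ = 1 + (\<beta> - 1) H\<close>. Jensen's inequality for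
  \<open>t \<mapsto> t\<^sup>\<beta>\<close> on each cell of the partition \<open>{E, E\<^sup>c}\<close> gives the data-processing bound
  \<open>p\<^sup>\<beta> q\<^bsup>1 - \<beta>\<^esup> + (1 - p)\<^sup>\<beta> (1 - q)\<^bsup>1 - \<beta>\<^esup> \<le> 1 + (\<beta> - 1) H\<close> with \<open>p = P(E)\<close>.
  Dropping the second term yields \<open>p \<le> u\<^sub>0\<close>; feeding \<open>1 - p \<ge> 1 - u\<^sub>0\<close> back into the
  second term and solving for \<open>p\<close> gives the claim.
\<close>

lemma powr_ge_tangent:
  fixes x c \<beta> :: real
  assumes "\<beta> > 1" and "x \<ge> 0" and "c \<ge> 0"
  shows "\<beta> * c powr (\<beta> - 1) * x - (\<beta> - 1) * c powr \<beta> \<le> x powr \<beta>"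
proof -
  define \<gamma> where "\<gamma> = \<beta> / (\<beta> - 1)"
  have "\<gamma> > 1" "1 / \<beta> + 1 / \<gamma> = 1"
    using assms(1) by (auto simp: \<gamma>_def field_simps)
  from Youngs_inequality[OF assms(1) this assms(2), of "c powr (\<beta> - 1)"]
  have "x * c powr (\<beta> - 1) \<le> x powr \<beta> / \<beta> + c powr \<beta> / \<gamma>"
    using assms(1) by (simp add: powr_powr \<gamma>_def)
  then show ?thesis
    using assms(1) by (simp add: \<gamma>_def field_simps)
qed

lemma le_root_of_powr_mult_le:
  fixes p q X \<beta> :: real
  assumes "\<beta> > 0" and "0 \<le> p" and "0 < q" and "p powr \<beta> * q powr (1 - \<beta>) \<le> X"
  shows "p \<le> (q powr (\<beta> - 1) * X) powr (1 / \<beta>)"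
proof -
  have "p powr \<beta> = p powr \<beta> * q powr (1 - \<beta>) * q powr (\<beta> - 1)"
    using assms(3) by (simp add: mult.assoc powr_add[symmetric])
  also have "\<dots> \<le> X * q powr (\<beta> - 1)"
    using assms(4) by (intro mult_right_mono) auto
  finally have "(p powr \<beta>) powr (1 / \<beta>) \<le> (X * q powr (\<beta> - 1)) powr (1 / \<beta>)"
    using assms(1) by (intro powr_mono2) auto
  then show ?thesis
    using assms(1,2) by (simp add: powr_powr mult.commute)
qed

lemma le_bound_of_binary_powr_sum_le:
  fixes p q N \<beta> :: real
  assumes \<beta>: "\<beta> > 1" and p: "0 \<le> p" "p \<le> 1" and q: "0 < q" "q < 1"
    and sum_le: "p powr \<beta> * q powr (1 - \<beta>) + (1 - p) powr \<beta> * (1 - q) powr (1 - \<beta>) \<le> N"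
  defines "u0 \<equiv> min 1 ((N * q powr (\<beta> - 1)) powr (1 / \<beta>))"
  shows "p \<le> (q powr (\<beta> - 1) * max 0 (N - (1 - q) powr (1 - \<beta>) * (1 - u0) powr \<beta>)) powr (1 / \<beta>)"
proof -
  have "p powr \<beta> * q powr (1 - \<beta>) \<le> N"
    using sum_le by (smt (verit) mult_nonneg_nonneg powr_ge_zero)
  then have "p \<le> u0"
    using \<beta> p q le_root_of_powr_mult_le[of \<beta> p q N] by (simp add: u0_def mult.commute)
  then have "(1 - u0) powr \<beta> \<le> (1 - p) powr \<beta>"
    using \<beta> by (intro powr_mono2) (auto simp: u0_def)
  then have "(1 - q) powr (1 - \<beta>) * (1 - u0) powr \<beta> \<le> (1 - p) powr \<beta> * (1 - q) powr (1 - \<beta>)"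
    by (simp add: mult.commute mult_right_mono)
  then have "p powr \<beta> * q powr (1 - \<beta>) \<le> N - (1 - q) powr (1 - \<beta>) * (1 - u0) powr \<beta>"
    using sum_le by linarith
  then have "p powr \<beta> * q powr (1 - \<beta>) \<le> max 0 (N - (1 - q) powr (1 - \<beta>) * (1 - u0) powr \<beta>)"
    by linarith
  then show ?thesis
    using \<beta> p q by (intro le_root_of_powr_mult_le) auto
qed

lemma set_integral_powr_ge:
  fixes f :: "'a \<Rightarrow> real"
  assumes \<beta>: "\<beta> > 1" and A: "A \<in> sets M" and m_pos: "0 < measure M A"
    and f_nonneg: "\<And>x. x \<in> A \<Longrightarrow> 0 \<le> f x"
    and f_int: "set_integrable M A f" and f_powr_int: "set_integrable M A (\<lambda>x. f x powr \<beta>)"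
  shows "(LINT x:A|M. f x) powr \<beta> * measure M A powr (1 - \<beta>) \<le> (LINT x:A|M. f x powr \<beta>)"
proof -
  \<comment> \<open>Jensen: integrate the tangent of \<open>t \<mapsto> t\<^sup>\<beta>\<close> at the mean value \<open>c\<close> of \<open>f\<close> on \<open>A\<close>.\<close>
  define m s where "m = measure M A" and "s = (LINT x:A|M. f x)"
  define c where "c = s / m"
  have A_finite: "emeasure M A \<noteq> \<infinity>"
    using m_pos by (auto simp: measure_def)
  have const_int: "set_integrable M A (\<lambda>_. C)" for C :: real
    using A A_finite by (simp add: set_integrable_def top.not_eq_extremum)
  have "0 \<le> s"
    using set_integral_mono[OF const_int f_int, of 0] f_nonneg by (simp add: s_def)
  then have c_nonneg: "0 \<le> c"
    using m_pos by (simp add: c_def m_def)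
  have "s powr \<beta> * m powr (1 - \<beta>) = \<beta> * c powr (\<beta> - 1) * s - (\<beta> - 1) * c powr \<beta> * m"
  proof -
    have "c powr (\<beta> - 1) * s = c powr \<beta> * m"
      using c_nonneg m_pos powr_mult_base[OF c_nonneg, of "\<beta> - 1"]
      by (simp add: c_def m_def field_simps)
    moreover have "c powr \<beta> * m = s powr \<beta> * m powr (1 - \<beta>)"
      using m_pos by (simp add: c_def m_def powr_divide powr_diff)
    ultimately show ?thesis by (simp add: algebra_simps)
  qed
  also have "\<dots> = (LINT x:A|M. \<beta> * c powr (\<beta> - 1) * f x - (\<beta> - 1) * c powr \<beta>)"
    using f_int const_int A A_finite by (simp add: s_def m_def set_integral_const algebra_simps)
  also have "\<dots> \<le> (LINT x:A|M. f x powr \<beta>)"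
    using f_int const_int f_powr_int f_nonneg powr_ge_tangent[OF \<beta> _ c_nonneg]
    by (intro set_integral_mono) auto
  finally show ?thesis by (simp add: s_def m_def)
qed

lemma (in sigma_finite_measure) measure_eq_set_integral_RN_deriv:
  assumes N: "finite_measure N" and ac: "absolutely_continuous M N" "sets N = sets M"
    and A: "A \<in> sets M"
  shows "set_integrable M A (\<lambda>x. enn2real (RN_deriv M N x))"
    and "measure N A = (LINT x:A|M. enn2real (RN_deriv M N x))"
proof -
  interpret N: finite_measure N by fact
  have N_int: "integrable N (indicator A :: _ \<Rightarrow> real)"
    using A ac(2) by (intro integrable_real_indicator) (auto simp: less_top[symmetric])
  show "set_integrable M A (\<lambda>x. enn2real (RN_deriv M N x))"
    using RN_deriv_integrable[OF N.sigma_finite_measure_axioms ac, of "indicator A"] A N_int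
    by (simp add: set_integrable_def mult.commute)
  show "measure N A = (LINT x:A|M. enn2real (RN_deriv M N x))"
    using RN_deriv_integral[OF N.sigma_finite_measure_axioms ac, of "indicator A"] A ac(2)
    by (simp add: set_lebesgue_integral_def mult.commute)
qed

lemma integral_RN_deriv_powr_eq_power_divergence:
  assumes \<beta>: "\<beta> > 1" and finite: "power_divergence \<beta> P Q \<noteq> \<infinity>"
  shows "integrable Q (\<lambda>x. enn2real (RN_deriv Q P x) powr \<beta>)"
    and "(\<integral>x. enn2real (RN_deriv Q P x) powr \<beta> \<partial>Q) = 1 + (\<beta> - 1) * real_of_ereal (power_divergence \<beta> P Q)"
proof -
  define N where "N = (\<integral>\<^sup>+ x. ennreal (enn2real (RN_deriv Q P x) powr \<beta>) \<partial>Q)"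
  have pd: "power_divergence \<beta> P Q = (enn2ereal N - 1) / ereal (\<beta> - 1)"
    by (simp add: power_divergence_def N_def)
  have "N \<noteq> \<top>"
    using finite \<beta> by (auto simp: pd)
  then obtain r where r: "N = ennreal r" "0 \<le> r"
    by (cases N) auto
  show "integrable Q (\<lambda>x. enn2real (RN_deriv Q P x) powr \<beta>)"
    using r by (intro integrableI_nn_integral_finite[of _ _ r]) (auto simp: N_def)
  have "(\<integral>x. enn2real (RN_deriv Q P x) powr \<beta> \<partial>Q) = r"
    using r by (subst integral_eq_nn_integral) (auto simp: N_def)
  moreover have "power_divergence \<beta> P Q = ereal ((r - 1) / (\<beta> - 1))"
    using r \<beta> by (simp add: pd one_ereal_def)
  ultimately show "(\<integral>x. enn2real (RN_deriv Q P x) powr \<beta> \<partial>Q) = 1 + (\<beta> - 1) * real_of_ereal (power_divergence \<beta> P Q)"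
    using \<beta> by simp
qed

lemma power_divergence_ge_binary:
  fixes P Q :: "'a measure" and E :: "'a set"
  assumes "prob_space P" and "prob_space Q" and sets_eq: "sets P = sets Q"
    and ac: "absolutely_continuous Q P" and \<beta>: "\<beta> > 1"
    and E: "E \<in> sets Q" and q: "0 < measure Q E" "measure Q E < 1"
    and finite: "power_divergence \<beta> P Q \<noteq> \<infinity>"
  shows "measure P E powr \<beta> * measure Q E powr (1 - \<beta>)
      + (1 - measure P E) powr \<beta> * (1 - measure Q E) powr (1 - \<beta>)
      \<le> 1 + (\<beta> - 1) * real_of_ereal (power_divergence \<beta> P Q)"
proof -
  interpret P: prob_space P by fact
  interpret Q: prob_space Q by fact
  define f where "f = (\<lambda>x. enn2real (RN_deriv Q P x))"
  define E' where "E' = space Q - E"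
  have E': "E' \<in> sets Q" "measure Q E' = 1 - measure Q E" "measure P E' = 1 - measure P E"
    using E sets_eq unfolding E'_def
    by (auto simp: Q.prob_compl) (metis P.prob_compl sets_eq_imp_space_eq)
  have f_powr_int: "integrable Q (\<lambda>x. f x powr \<beta>)"
    and f_powr_integral: "(\<integral>x. f x powr \<beta> \<partial>Q) = 1 + (\<beta> - 1) * real_of_ereal (power_divergence \<beta> P Q)"
    using integral_RN_deriv_powr_eq_power_divergence[OF \<beta> finite] by (simp_all add: f_def)
  have f_powr_set_int: "set_integrable Q A (\<lambda>x. f x powr \<beta>)" if "A \<in> sets Q" for A
    unfolding set_integrable_def using that f_powr_int by (rule integrable_mult_indicator)
  have cell_bound: "measure P A powr \<beta> * measure Q A powr (1 - \<beta>) \<le> (LINT x:A|Q. f x powr \<beta>)"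
    if A: "A \<in> sets Q" and "0 < measure Q A" for A
  proof -
    have "set_integrable Q A f" "measure P A = (LINT x:A|Q. f x)"
      using Q.measure_eq_set_integral_RN_deriv[OF P.finite_measure_axioms ac sets_eq A]
      by (simp_all add: f_def)
    then show ?thesis
      using set_integral_powr_ge[OF \<beta> A \<open>0 < measure Q A\<close>] f_powr_set_int[OF A]
      by (simp add: f_def)
  qed
  have "(LINT x:E|Q. f x powr \<beta>) + (LINT x:E'|Q. f x powr \<beta>) = (LINT x:E \<union> E'|Q. f x powr \<beta>)"
    using E E' f_powr_set_int by (intro set_integral_Un[symmetric]) (auto simp: E'_def)
  also have "\<dots> = (\<integral>x. f x powr \<beta> \<partial>Q)"
    using sets.sets_into_space[OF E] f_powr_int by (simp add: E'_def Un_absorb1 set_integral_space)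
  finally show ?thesis
    using cell_bound[OF E q(1)] cell_bound[OF E'(1)] q E' f_powr_integral by simp
qed

theorem mainTheorem3:
  fixes P Q :: "'a measure" and \<beta> :: real and E :: "'a set"
  assumes "prob_space P" and "prob_space Q"
    and "sets P = sets Q"
    and "absolutely_continuous Q P"
    and "\<beta> > 1"
    and "E \<in> sets Q"
    and "0 < measure Q E" and "measure Q E < 1"
  shows "power_divergence \<beta> P Q \<noteq> \<infinity> \<longrightarrow>
    (let q = measure Q E; H = real_of_ereal (power_divergence \<beta> P Q);
         u0 = min 1 (((1 + (\<beta> - 1) * H) * q powr (\<beta> - 1)) powr (1 / \<beta>))
     in measure P E \<le>
          (q powr (\<beta> - 1) * max 0 (1 + (\<beta> - 1) * H - (1 - q) powr (1 - \<beta>) * (1 - u0) powr \<beta>))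
            powr (1 / \<beta>))"
proof -
  have binary_bound: "measure P E powr \<beta> * measure Q E powr (1 - \<beta>)
      + (1 - measure P E) powr \<beta> * (1 - measure Q E) powr (1 - \<beta>)
      \<le> 1 + (\<beta> - 1) * real_of_ereal (power_divergence \<beta> P Q)"
    if "power_divergence \<beta> P Q \<noteq> \<infinity>"
    using assms that by (rule power_divergence_ge_binary)
  have "0 \<le> measure P E" "measure P E \<le> 1"
    using prob_space.prob_le_1[OF \<open>prob_space P\<close>] by auto
  then show ?thesis
    using binary_bound le_bound_of_binary_powr_sum_le \<open>\<beta> > 1\<close> assms(7,8)
    unfolding Let_def by blast
qed

end
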